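(* Let $\mu$ be a Carleson measure on $\mathbb R^{n+1}_+=\mathbb R^n\times(0,\infty)$, and let $\{K_t\}_{t>0}$ be functions on $\mathbb R^n$ such that for some $\delta>0$, $|K_t(z)|\lesssim t^{-n}(1+|z|/t)^{-n-\delta}$ for all $z\in\mathbb R^n$, $t>0$. Define the measure $\tilde\mu$ on $\mathbb R^{n+1}_+$ by $d\tilde\mu(x,t)=\big(\int|K_t(x-y)|\,d\mu(y,t)\big)dx$, i.e. $\tilde\mu(E)=\iint\mathbf 1_E(x,t)|K_t(x-y)|\,dx\,d\mu(y,t)$. Then $\tilde\mu$ is a Carleson measure and $\|\tilde\mu\|_{\mathcal C}\lesssim\|\mu\|_{\mathcal C}$.
   Context: A Borel measure $\mu$ on $\mathbb R^{n+1}_+$ is a Carleson measure if $\|\mu\|_{\mathcal C}=\sup_{\epsilon>0}\sup_{y\in\mathbb R^n}\epsilon^{-n}\int_0^\epsilon\int_{|x-y|<\epsilon}d|\mu|(x,t)<\infty$; $\|\mu\|_{\mathcal C}$ is its Carleson norm. *)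

theory Defs
  imports "HOL-Analysis.Analysis"
begin

text \<open>Points of the upper half space R^{n+1}_+ are pairs (x,t) :: 'a \<times> real with t > 0,
  where 'a is a Euclidean space of dimension n = DIM('a).\<close>

definition upper_half_space :: "('a::euclidean_space \<times> real) set" where
  "upper_half_space = {p. snd p > 0}"

text \<open>A (positive) Borel measure on R^{n+1}_+: a Borel measure on 'a \<times> real giving no
  mass to the complement of the upper half space.\<close>
definition borel_measure_uhs :: "('a::euclidean_space \<times> real) measure \<Rightarrow> bool" where
  "borel_measure_uhs M \<longleftrightarrow> sets M = sets borel \<and> emeasure M (- upper_half_space) = 0"

definition carleson_norm :: "('a::euclidean_space \<times> real) measure \<Rightarrow> ennreal" where
  "carleson_norm M =
     (SUP \<epsilon>\<in>{0<..}. SUP y\<in>UNIV.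
        ennreal (\<epsilon> powr (- real DIM('a))) * emeasure M (ball y \<epsilon> \<times> {0<..<\<epsilon>}))"

definition carleson_measure :: "('a::euclidean_space \<times> real) measure \<Rightarrow> bool" where
  "carleson_measure M \<longleftrightarrow> borel_measure_uhs M \<and> carleson_norm M < \<infinity>"

definition tilde_measure ::
  "(real \<Rightarrow> 'a::euclidean_space \<Rightarrow> 'b::real_normed_vector) \<Rightarrow> ('a \<times> real) measure \<Rightarrow> ('a \<times> real) measure" where
  "tilde_measure K M = measure_of UNIV (sets borel)
     (\<lambda>E. \<integral>\<^sup>+ p. (\<integral>\<^sup>+ x. indicator E (x, snd p) * ennreal (norm (K (snd p) (x - fst p))) \<partial>lborel) \<partial>M)"

end

theory Submission
  imports Defs
begin

text \<open>Fix a box \<open>Q = B(y\<^sub>0,\<epsilon>) \<times> (0,\<epsilon>)\<close>. Then \<open>\<tilde>\<mu>(Q) = \<integral> F d\<mu>\<close> with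
  \<open>F(y,t) = \<integral>\<^bsub>B(y\<^sub>0,\<epsilon>)\<^esub> |K\<^sub>t(x - y)| dx\<close> for \<open>t < \<epsilon>\<close> and \<open>F = 0\<close> otherwise. The kernel bound makes
  \<open>F\<close> bounded (\<open>K\<^sub>t\<close> has uniformly bounded \<open>L\<^sup>1\<close> norm) and, for \<open>|y - y\<^sub>0| \<ge> 2\<epsilon>\<close>, of size
  \<open>(|y - y\<^sub>0|/2\<epsilon>)\<^sup>-\<^sup>n\<^sup>-\<^sup>\<delta>\<close>. Splitting \<open>\<real>\<^sup>n\<close> into the dyadic balls \<open>|y - y\<^sub>0| < 2\<^sup>k 2\<epsilon>\<close>, the Carleson
  condition bounds the \<open>\<mu>\<close>-mass of the support of \<open>F\<close> in each by \<open>\<parallel>\<mu>\<parallel> (2\<^sup>k 2\<epsilon>)\<^sup>n\<close>, and the decay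
  exponent \<open>n + \<delta> > n\<close> makes the resulting series geometric, so \<open>\<tilde>\<mu>(Q) \<lesssim> \<epsilon>\<^sup>n \<parallel>\<mu>\<parallel>\<close>. The
  same dyadic summation, with Lebesgue measure in place of \<open>\<mu>\<close>, bounds the \<open>L\<^sup>1\<close> norm of \<open>K\<^sub>t\<close>.\<close>

lemma exists_pow2_bracket:
  fixes y :: real
  assumes "1 \<le> y"
  obtains j :: nat where "2 ^ j \<le> y" "y < 2 ^ Suc j"
proof
  define j where "j = nat \<lfloor>log 2 y\<rfloor>"
  have "real j = of_int \<lfloor>log 2 y\<rfloor>"
    using assms by (simp add: j_def)
  hence j: "real j \<le> log 2 y" "log 2 y < real j + 1"
    by linarith+
  have "(2::real) ^ j = 2 powr real j"
    by (simp add: powr_realpow)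
  also have "\<dots> \<le> 2 powr log 2 y"
    using j by simp
  finally show "2 ^ j \<le> y"
    using assms by simp
  have "y = 2 powr log 2 y"
    using assms by simp
  also have "\<dots> < 2 powr (real j + 1)"
    using j by simp
  also have "\<dots> = 2 ^ Suc j"
    by (simp add: powr_add powr_realpow)
  finally show "y < 2 ^ Suc j" .
qed

definition dyadic_const :: "real \<Rightarrow> real \<Rightarrow> real" where
  "dyadic_const m p = 2 powr p / (1 - 2 powr (m - p))"

lemma sums_dyadic_const:
  assumes "m < p"
  shows "(\<lambda>k. 2 powr p * (2 powr (m - p)) ^ k) sums dyadic_const m p"
proof -
  have "2 powr (m - p) < 1"
    using assms powr_less_mono[of "m - p" 0 2] by simp
  hence "(\<lambda>k. (2 powr (m - p)) ^ k) sums (1 / (1 - 2 powr (m - p)))"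
    by (intro geometric_sums) simp
  from sums_mult[OF this, of "2 powr p"] show ?thesis
    by (simp add: dyadic_const_def)
qed

lemma dyadic_const_ge_1:
  assumes "0 \<le> m" "m < p"
  shows "1 \<le> dyadic_const m p"
proof -
  have "0 < 2 powr (m - p)" "2 powr (m - p) < 1"
    using assms powr_less_mono[of "m - p" 0 2] by simp_all
  moreover have "1 \<le> 2 powr p"
    using assms by (simp add: ge_one_powr_ge_zero)
  ultimately have "1 - 2 powr (m - p) \<le> 2 powr p"
    by linarith
  with \<open>2 powr (m - p) < 1\<close> show ?thesis
    by (simp add: dyadic_const_def le_divide_eq)
qed

text \<open>The weight of the ball \<open>d < 2\<^sup>k s\<close> is the decay bound on the annulus
  \<open>2\<^sup>k\<^sup>-\<^sup>1 s \<le> d < 2\<^sup>k s\<close>.\<close>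
lemma dyadic_majorant:
  fixes v :: ennreal
  assumes "0 \<le> B" "0 < s" "0 \<le> p"
    and bound: "v \<le> ennreal B"
    and decay: "s \<le> d \<Longrightarrow> v \<le> ennreal (B * (d / s) powr (- p))"
  shows "v \<le> (\<Sum>k. ennreal (B * 2 powr ((1 - real k) * p)) * indicator {..<2 ^ k * s} d)"
    (is "_ \<le> (\<Sum>k. ?a k)")
proof -
  have term_le: "f k \<le> suminf f" for f :: "nat \<Rightarrow> ennreal" and k
    using sum_le_suminf[OF summableI, of "{k}" f] by simp
  show ?thesis
  proof (cases "d < s")
    case True
    have "ennreal B \<le> ennreal (B * 2 powr p)"
      using assms by (intro ennreal_leI) (simp add: ge_one_powr_ge_zero mult_le_cancel_left1)
    also have "\<dots> = ?a 0"
      using True by simp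
    finally show ?thesis
      using bound term_le[of ?a 0] by order
  next
    case False
    then obtain j :: nat where j: "2 ^ j \<le> d / s" "d / s < 2 ^ Suc j"
      using \<open>0 < s\<close> exists_pow2_bracket[of "d / s"] by auto
    have "(d / s) powr (- p) \<le> (2 ^ j) powr (- p)"
      using j assms by (intro powr_mono2') auto
    also have "\<dots> = 2 powr ((1 - real (Suc j)) * p)"
      by (simp add: powr_realpow[symmetric] powr_powr)
    finally have "v \<le> ennreal (B * 2 powr ((1 - real (Suc j)) * p))"
      using decay False \<open>0 \<le> B\<close> by (meson ennreal_leI mult_left_mono not_le order_trans)
    also have "\<dots> = ?a (Suc j)"
      using j \<open>0 < s\<close> by (simp add: field_simps)
    finally show ?thesis
      using term_le[of ?a "Suc j"] by order
  qed
qed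

text \<open>The \<open>k\<close>-th ball of the majorant contributes at most \<open>B 2\<^sup>(\<^sup>1\<^sup>-\<^sup>k\<^sup>)\<^sup>p N (2\<^sup>k s)\<^sup>m\<close>,
  a geometric series with ratio \<open>2\<^sup>m\<^sup>-\<^sup>p < 1\<close>.\<close>
lemma nn_integral_le_dyadic_balls:
  fixes \<nu> :: "'b measure" and g :: "'b \<Rightarrow> ennreal" and d :: "'b \<Rightarrow> real"
  assumes [measurable]: "g \<in> borel_measurable \<nu>" "d \<in> borel_measurable \<nu>"
    and "0 < s" "0 \<le> m" "m < p" "0 \<le> B"
    and bound: "\<And>x. x \<in> space \<nu> \<Longrightarrow> g x \<le> ennreal B"
    and decay: "\<And>x. x \<in> space \<nu> \<Longrightarrow> s \<le> d x \<Longrightarrow> g x \<le> ennreal (B * (d x / s) powr (- p))"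
    and growth: "\<And>r. s \<le> r \<Longrightarrow> emeasure \<nu> {x\<in>space \<nu>. d x < r \<and> g x \<noteq> 0} \<le> ennreal (r powr m) * N"
  shows "(\<integral>\<^sup>+x. g x \<partial>\<nu>) \<le> ennreal (B * dyadic_const m p * s powr m) * N"
proof -
  define c :: "nat \<Rightarrow> real" where "c k = B * 2 powr ((1 - real k) * p)" for k
  define S where "S k = {x\<in>space \<nu>. d x < 2 ^ k * s \<and> g x \<noteq> 0}" for k :: nat
  have S_sets[measurable]: "S k \<in> sets \<nu>" for k
    unfolding S_def by measurable
  have S_growth: "emeasure \<nu> (S k) \<le> ennreal ((2 ^ k * s) powr m) * N" for k
  proof -
    have "s \<le> 2 ^ k * s"
      using \<open>0 < s\<close> by simp
    thus ?thesis
      unfolding S_def by (rule growth)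
  qed
  have majorant: "g x \<le> (\<Sum>k. ennreal (c k) * indicator (S k) x)" if "x \<in> space \<nu>" for x
  proof (cases "g x = 0")
    case False
    hence "indicator (S k) x = (indicator {..<2 ^ k * s} (d x) :: ennreal)" for k
      using that by (simp add: S_def indicator_def)
    thus ?thesis
      unfolding c_def using assms that by (simp only:) (intro dyadic_majorant; simp)
  qed simp
  have term_eq: "ennreal (c k) * (ennreal ((2 ^ k * s) powr m) * N) =
      ennreal (B * s powr m) * N * ennreal (2 powr p * (2 powr (m - p)) ^ k)" for k
  proof -
    have c_nonneg: "0 \<le> c k"
      using \<open>0 \<le> B\<close> by (simp add: c_def)
    have "c k * (2 ^ k * s) powr m = B * s powr m * (2 powr p * (2 powr (m - p)) ^ k)"
      unfolding c_def using \<open>0 < s\<close>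
      by (simp add: powr_mult powr_realpow[symmetric] powr_powr powr_add[symmetric] algebra_simps)
    moreover have "ennreal (c k) * (ennreal ((2 ^ k * s) powr m) * N) =
        ennreal (c k * (2 ^ k * s) powr m) * N"
      using c_nonneg by (simp add: ennreal_mult mult.assoc)
    ultimately show ?thesis
      using \<open>0 \<le> B\<close> by (simp add: ennreal_mult mult_ac)
  qed
  have "(\<integral>\<^sup>+x. g x \<partial>\<nu>) \<le> (\<integral>\<^sup>+x. (\<Sum>k. ennreal (c k) * indicator (S k) x) \<partial>\<nu>)"
    by (intro nn_integral_mono majorant)
  also have "\<dots> = (\<Sum>k. ennreal (c k) * emeasure \<nu> (S k))"
    by (simp add: nn_integral_suminf nn_integral_cmult_indicator)
  also have "\<dots> \<le> (\<Sum>k. ennreal (c k) * (ennreal ((2 ^ k * s) powr m) * N))"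
    using S_growth by (intro suminf_le mult_left_mono) auto
  also have "\<dots> = ennreal (B * s powr m) * N * (\<Sum>k. ennreal (2 powr p * (2 powr (m - p)) ^ k))"
    by (simp add: term_eq)
  also have "(\<Sum>k. ennreal (2 powr p * (2 powr (m - p)) ^ k)) = ennreal (dyadic_const m p)"
    using sums_dyadic_const[OF \<open>m < p\<close>] by (intro suminf_ennreal_eq) auto
  finally show ?thesis
    using \<open>0 \<le> B\<close> dyadic_const_ge_1[OF \<open>0 \<le> m\<close> \<open>m < p\<close>]
    by (simp add: ennreal_mult mult_ac)
qed

lemma borel_measurable_kernel_integrand:
  fixes K :: "real \<Rightarrow> 'a::euclidean_space \<Rightarrow> 'b::real_normed_vector" and M :: "('a \<times> real) measure"
  assumes K: "(\<lambda>p. K (snd p) (fst p)) \<in> borel_measurable borel"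
    and E: "E \<in> sets borel" and M: "sets M = sets borel"
  shows "(\<lambda>(p, x). indicator E (x, snd p) * ennreal (norm (K (snd p) (x - fst p))))
    \<in> borel_measurable (M \<Otimes>\<^sub>M lborel)"
proof -
  define K' where "K' = (\<lambda>p. K (snd p) (fst p))"
  have sets_eq: "sets (M \<Otimes>\<^sub>M lborel) = sets (((borel::'a measure) \<Otimes>\<^sub>M (borel::real measure)) \<Otimes>\<^sub>M (borel::'a measure))"
    by (rule sets_pair_measure_cong) (simp_all add: M, metis borel_prod)
  have [measurable]: "K' \<in> borel_measurable ((borel::'a measure) \<Otimes>\<^sub>M (borel::real measure))"
    using K unfolding K'_def by (simp add: borel_prod)
  have [measurable]: "E \<in> sets ((borel::'a measure) \<Otimes>\<^sub>M (borel::real measure))"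
    using E by (metis borel_prod)
  have "(\<lambda>q. indicator E (snd q, snd (fst q)) * ennreal (norm (K' (snd q - fst (fst q), snd (fst q)))))
     \<in> borel_measurable (((borel::'a measure) \<Otimes>\<^sub>M (borel::real measure)) \<Otimes>\<^sub>M (borel::'a measure))"
    by measurable
  thus ?thesis
    unfolding measurable_cong_sets[OF sets_eq refl] by (simp add: K'_def case_prod_beta')
qed

lemma borel_measurable_kernel_integrand_slice:
  fixes K :: "real \<Rightarrow> 'a::euclidean_space \<Rightarrow> 'b::real_normed_vector" and M :: "('a \<times> real) measure"
  assumes K: "(\<lambda>p. K (snd p) (fst p)) \<in> borel_measurable borel"
    and E: "E \<in> sets borel" and M: "sets M = sets borel"
  shows "(\<lambda>x. indicator E (x, snd p) * ennreal (norm (K (snd p) (x - fst p)))) \<in> borel_measurable lborel"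
  using measurable_compose_Pair1[of p M, OF _ borel_measurable_kernel_integrand[OF K E M]] M
  by (simp add: sets_eq_imp_space_eq)

lemma sets_tilde_measure: "sets (tilde_measure K M) = sets borel"
  unfolding tilde_measure_def using sets.sigma_sets_eq[of borel] by (simp add: sets_measure_of_conv)

lemma emeasure_tilde_measure:
  fixes K :: "real \<Rightarrow> 'a::euclidean_space \<Rightarrow> 'b::real_normed_vector" and M :: "('a \<times> real) measure"
  assumes K: "(\<lambda>p. K (snd p) (fst p)) \<in> borel_measurable borel"
    and E: "E \<in> sets borel" and M: "sets M = sets borel"
  shows "emeasure (tilde_measure K M) E =
    (\<integral>\<^sup>+ p. (\<integral>\<^sup>+ x. indicator E (x, snd p) * ennreal (norm (K (snd p) (x - fst p))) \<partial>lborel) \<partial>M)"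
proof -
  define f where "f E = (\<integral>\<^sup>+ p. (\<integral>\<^sup>+ x. indicator E (x, snd p) * ennreal (norm (K (snd p) (x - fst p))) \<partial>lborel) \<partial>M)" for E
  have outer: "(\<lambda>p. \<integral>\<^sup>+ x. indicator E (x, snd p) * ennreal (norm (K (snd p) (x - fst p))) \<partial>lborel) \<in> borel_measurable M"
    if "E \<in> sets borel" for E
    using lborel.borel_measurable_nn_integral_fst[OF borel_measurable_kernel_integrand[OF K that M]] by simp
  have "countably_additive (sets borel) f"
    unfolding countably_additive_def
  proof (intro allI impI)
    fix A :: "nat \<Rightarrow> ('a \<times> real) set"
    assume A: "range A \<subseteq> sets borel" "disjoint_family A" "\<Union> (range A) \<in> sets borel"
    have "(\<Sum>i. f (A i)) = (\<integral>\<^sup>+ p. (\<Sum>i. \<integral>\<^sup>+ x. indicator (A i) (x, snd p) * ennreal (norm (K (snd p) (x - fst p))) \<partial>lborel) \<partial>M)"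
      unfolding f_def using A by (intro nn_integral_suminf[symmetric] outer) auto
    also have "\<dots> = (\<integral>\<^sup>+ p. (\<integral>\<^sup>+ x. (\<Sum>i. indicator (A i) (x, snd p) * ennreal (norm (K (snd p) (x - fst p)))) \<partial>lborel) \<partial>M)"
      using A by (intro nn_integral_cong nn_integral_suminf[symmetric] borel_measurable_kernel_integrand_slice[OF K _ M]) auto
    also have "\<dots> = f (\<Union> (range A))"
      unfolding f_def ennreal_suminf_multc suminf_indicator[OF A(2)] by simp
    finally show "(\<Sum>i. f (A i)) = f (\<Union> (range A))" .
  qed
  moreover have "sigma_algebra UNIV (sets borel)"
    using sets.sigma_algebra_axioms[of borel] by simp
  moreover have "positive (sets borel) f"
    unfolding positive_def f_def by simp
  ultimately show ?thesis
    unfolding tilde_measure_def f_def[symmetric] using E by (intro emeasure_measure_of_sigma)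
qed

lemma emeasure_tilde_measure_outside_upper_half_space:
  fixes K :: "real \<Rightarrow> 'a::euclidean_space \<Rightarrow> 'b::real_normed_vector" and M :: "('a \<times> real) measure"
  assumes K: "(\<lambda>p. K (snd p) (fst p)) \<in> borel_measurable borel"
    and M: "sets M = sets borel" and null: "emeasure M (- upper_half_space) = 0"
  shows "emeasure (tilde_measure K M) (- upper_half_space) = 0"
proof -
  have "open (upper_half_space :: ('a \<times> real) set)"
    unfolding upper_half_space_def by (intro open_Collect_less continuous_intros)
  hence sets: "- upper_half_space \<in> sets (borel :: ('a \<times> real) measure)"
    by (intro borel_closed) (simp add: closed_Compl)
  have "AE p in M. (\<integral>\<^sup>+ x. indicator (- upper_half_space) (x, snd p) * ennreal (norm (K (snd p) (x - fst p))) \<partial>lborel) = 0"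
    using null sets M
    by (intro AE_I'[of "- upper_half_space"]) (auto simp: null_sets_def upper_half_space_def indicator_def)
  hence "(\<integral>\<^sup>+ p. (\<integral>\<^sup>+ x. indicator (- upper_half_space) (x, snd p) * ennreal (norm (K (snd p) (x - fst p))) \<partial>lborel) \<partial>M) = 0"
    by (subst nn_integral_cong_AE) auto
  thus ?thesis
    by (simp add: emeasure_tilde_measure[OF K sets M])
qed

lemma emeasure_box_le_carleson_norm:
  fixes M :: "('a::euclidean_space \<times> real) measure"
  assumes "0 < r"
  shows "emeasure M (ball y r \<times> {0<..<r}) \<le> ennreal (r powr real DIM('a)) * carleson_norm M"
proof -
  have "ennreal (r powr - real DIM('a)) * emeasure M (ball y r \<times> {0<..<r}) \<le> carleson_norm M"
    unfolding carleson_norm_def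
    by (rule SUP_upper2[of r], use assms in simp, rule SUP_upper2[of y]) auto
  hence "ennreal (r powr real DIM('a)) * (ennreal (r powr - real DIM('a)) * emeasure M (ball y r \<times> {0<..<r}))
      \<le> ennreal (r powr real DIM('a)) * carleson_norm M"
    by (rule mult_left_mono) simp
  moreover have "ennreal (r powr real DIM('a)) * ennreal (r powr - real DIM('a)) = 1"
    using assms by (simp add: ennreal_mult[symmetric] powr_add[symmetric])
  ultimately show ?thesis
    by (simp add: mult.assoc[symmetric])
qed

definition kernel_decay :: "real \<Rightarrow> real \<Rightarrow> (real \<Rightarrow> 'a::euclidean_space \<Rightarrow> 'b::real_normed_vector) \<Rightarrow> bool" where
  "kernel_decay A \<delta> K \<longleftrightarrow>
     (\<forall>t>0. \<forall>z. norm (K t z) \<le> A * t powr (- real DIM('a)) * (1 + norm z / t) powr (- (real DIM('a) + \<delta>)))"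

lemma kernel_decay_const_nonneg:
  assumes "kernel_decay A \<delta> K"
  shows "0 \<le> A"
proof -
  have "norm (K 1 0) \<le> A"
    using assms unfolding kernel_decay_def by (metis add_0_right div_0 mult_1_right norm_zero powr_one_eq_one zero_less_one)
  thus ?thesis
    using norm_ge_zero[of "K 1 0"] by linarith
qed

lemma kernel_decay_le:
  fixes K :: "real \<Rightarrow> 'a::euclidean_space \<Rightarrow> 'b::real_normed_vector"
  assumes "kernel_decay A \<delta> K" "0 \<le> \<delta>" "0 < t"
  shows "norm (K t z) \<le> A * t powr (- real DIM('a))"
proof -
  have "norm (K t z) \<le> A * t powr (- real DIM('a)) * (1 + norm z / t) powr (- (real DIM('a) + \<delta>))"
    using assms unfolding kernel_decay_def by blast
  also have "\<dots> \<le> A * t powr (- real DIM('a)) * 1"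
    using assms kernel_decay_const_nonneg[OF assms(1)]
      powr_mono2'[of "- (real DIM('a) + \<delta>)" 1 "1 + norm z / t"]
    by (intro mult_left_mono) auto
  finally show ?thesis by simp
qed

lemma kernel_decay_le_far:
  fixes K :: "real \<Rightarrow> 'a::euclidean_space \<Rightarrow> 'b::real_normed_vector"
  assumes "kernel_decay A \<delta> K" "0 \<le> \<delta>" "0 < t" "z \<noteq> 0"
  shows "norm (K t z) \<le> A * t powr \<delta> * norm z powr (- (real DIM('a) + \<delta>))"
proof -
  let ?q = "real DIM('a) + \<delta>"
  have "norm (K t z) \<le> A * t powr (- real DIM('a)) * (1 + norm z / t) powr (- ?q)"
    using assms unfolding kernel_decay_def by blast
  also have "\<dots> \<le> A * t powr (- real DIM('a)) * (norm z / t) powr (- ?q)"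
    using assms kernel_decay_const_nonneg[OF assms(1)]
    by (intro mult_left_mono powr_mono2') auto
  also have "\<dots> = A * t powr \<delta> * norm z powr (- ?q)"
    using assms by (simp add: powr_divide powr_minus powr_add[symmetric] field_simps)
  finally show ?thesis .
qed

lemma nn_integral_kernel_le:
  fixes K :: "real \<Rightarrow> 'a::euclidean_space \<Rightarrow> 'b::real_normed_vector" and g :: "'a \<Rightarrow> ennreal"
  assumes K: "kernel_decay A \<delta> K" and "0 < \<delta>" "0 < t"
    and [measurable]: "g \<in> borel_measurable lborel"
    and g_le: "\<And>x. g x \<le> ennreal (norm (K t (x - y)))"
  shows "(\<integral>\<^sup>+x. g x \<partial>lborel)
    \<le> ennreal (A * unit_ball_vol (real DIM('a)) * dyadic_const (real DIM('a)) (real DIM('a) + \<delta>))"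
proof -
  let ?n = "real DIM('a)" and ?\<omega> = "unit_ball_vol (real DIM('a))"
  have "0 \<le> A"
    using kernel_decay_const_nonneg[OF K] .
  have "(\<integral>\<^sup>+x. g x \<partial>lborel)
      \<le> ennreal (A * t powr (- ?n) * dyadic_const ?n (?n + \<delta>) * t powr ?n) * ennreal ?\<omega>"
  proof (rule nn_integral_le_dyadic_balls[where d = "\<lambda>x. norm (x - y)"])
    show "g x \<le> ennreal (A * t powr (- ?n))" for x
      using g_le[of x] kernel_decay_le[OF K _ \<open>0 < t\<close>, of "x - y"] \<open>0 < \<delta>\<close>
      by (meson ennreal_leI less_imp_le order_trans)
    show "g x \<le> ennreal (A * t powr (- ?n) * (norm (x - y) / t) powr (- (?n + \<delta>)))"
      if "t \<le> norm (x - y)" for x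
    proof -
      have "x - y \<noteq> 0"
        using that \<open>0 < t\<close> by auto
      hence "norm (K t (x - y)) \<le> A * t powr \<delta> * norm (x - y) powr (- (?n + \<delta>))"
        using kernel_decay_le_far[OF K _ \<open>0 < t\<close>] \<open>0 < \<delta>\<close> by simp
      also have "\<dots> = A * t powr (- ?n) * (norm (x - y) / t) powr (- (?n + \<delta>))"
        using \<open>0 < t\<close> \<open>x - y \<noteq> 0\<close> by (simp add: powr_divide powr_minus powr_add[symmetric] field_simps)
      finally show ?thesis
        using g_le[of x] by (meson ennreal_leI order_trans)
    qed
    show "emeasure lborel {x \<in> space lborel. norm (x - y) < r \<and> g x \<noteq> 0} \<le> ennreal (r powr ?n) * ennreal ?\<omega>"
      if "t \<le> r" for r
    proof -
      have "{x \<in> space lborel. norm (x - y) < r \<and> g x \<noteq> 0} \<subseteq> ball y r"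
        by (auto simp: dist_norm norm_minus_commute)
      hence "emeasure lborel {x \<in> space lborel. norm (x - y) < r \<and> g x \<noteq> 0} \<le> emeasure lborel (ball y r)"
        by (intro emeasure_mono) auto
      also have "\<dots> = ennreal (r powr ?n) * ennreal ?\<omega>"
        using that \<open>0 < t\<close> by (simp add: emeasure_ball powr_realpow ennreal_mult[symmetric] mult.commute)
      finally show ?thesis .
    qed
  qed (use \<open>0 < t\<close> \<open>0 < \<delta>\<close> \<open>0 \<le> A\<close> in auto)
  also have "\<dots> = ennreal (A * ?\<omega> * dyadic_const ?n (?n + \<delta>))"
    using \<open>0 < t\<close> \<open>0 \<le> A\<close> dyadic_const_ge_1[of ?n "?n + \<delta>"] \<open>0 < \<delta>\<close>
    by (simp add: ennreal_mult[symmetric] powr_add[symmetric] mult_ac)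
  finally show ?thesis .
qed

text \<open>For \<open>t < \<epsilon> \<le> |y - y\<^sub>0|/2\<close> every \<open>x \<in> B(y\<^sub>0,\<epsilon>)\<close> has \<open>|x - y| \<ge> |y - y\<^sub>0|/2\<close>, so the
  far-field bound of the kernel applies uniformly on the ball.\<close>
lemma nn_integral_kernel_ball_far_le:
  fixes K :: "real \<Rightarrow> 'a::euclidean_space \<Rightarrow> 'b::real_normed_vector"
  assumes K: "kernel_decay A \<delta> K" and "0 \<le> \<delta>" "0 < t" "t < \<epsilon>" and far: "2 * \<epsilon> \<le> norm (y - y\<^sub>0)"
  shows "(\<integral>\<^sup>+x. indicator (ball y\<^sub>0 \<epsilon>) x * ennreal (norm (K t (x - y))) \<partial>lborel)
    \<le> ennreal (A * unit_ball_vol (real DIM('a)) * (norm (y - y\<^sub>0) / (2 * \<epsilon>)) powr (- (real DIM('a) + \<delta>)))"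
proof -
  let ?n = "real DIM('a)" and ?\<omega> = "unit_ball_vol (real DIM('a))" and ?q = "real DIM('a) + \<delta>"
  define c where "c = A * \<epsilon> powr \<delta> * (norm (y - y\<^sub>0) / 2) powr (- ?q)"
  have "0 \<le> A" "0 < \<epsilon>"
    using kernel_decay_const_nonneg[OF K] assms by auto
  have pointwise: "norm (K t (x - y)) \<le> c" if "x \<in> ball y\<^sub>0 \<epsilon>" for x
  proof -
    have "norm (y - y\<^sub>0) \<le> norm (x - y) + norm (x - y\<^sub>0)"
      using norm_triangle_ineq[of "y - x" "x - y\<^sub>0"] by (simp add: norm_minus_commute)
    moreover have "norm (x - y\<^sub>0) < \<epsilon>"
      using that by (simp add: dist_norm norm_minus_commute)
    ultimately have near: "norm (y - y\<^sub>0) / 2 \<le> norm (x - y)" "x - y \<noteq> 0"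
      using far \<open>0 < \<epsilon>\<close> by auto
    have "norm (K t (x - y)) \<le> A * t powr \<delta> * norm (x - y) powr (- ?q)"
      using kernel_decay_le_far[OF K \<open>0 \<le> \<delta>\<close> \<open>0 < t\<close> near(2)] .
    also have "\<dots> \<le> c"
      unfolding c_def using assms near \<open>0 \<le> A\<close> \<open>0 < \<epsilon>\<close>
      by (intro mult_mono mult_left_mono powr_mono2 powr_mono2') auto
    finally show ?thesis .
  qed
  have "(\<integral>\<^sup>+x. indicator (ball y\<^sub>0 \<epsilon>) x * ennreal (norm (K t (x - y))) \<partial>lborel)
      \<le> (\<integral>\<^sup>+x. ennreal c * indicator (ball y\<^sub>0 \<epsilon>) x \<partial>lborel)"
    using pointwise by (intro nn_integral_mono) (auto simp: indicator_def ennreal_leI)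
  also have "\<dots> = ennreal c * ennreal (?\<omega> * \<epsilon> ^ DIM('a))"
    using \<open>0 < \<epsilon>\<close> by (simp add: nn_integral_cmult_indicator emeasure_ball)
  also have "\<dots> = ennreal (A * ?\<omega> * (norm (y - y\<^sub>0) / (2 * \<epsilon>)) powr (- ?q))"
  proof -
    have "(norm (y - y\<^sub>0) / (2 * \<epsilon>)) powr (- ?q) = (norm (y - y\<^sub>0) / 2) powr (- ?q) / \<epsilon> powr (- ?q)"
      using powr_divide[of "norm (y - y\<^sub>0) / 2" \<epsilon> "- ?q"] \<open>0 < \<epsilon>\<close> by simp
    also have "\<dots> = \<epsilon> powr ?q * (norm (y - y\<^sub>0) / 2) powr (- ?q)"
      by (simp only: powr_minus_divide[of \<epsilon>]) simp
    also have "\<epsilon> powr ?q = \<epsilon> powr \<delta> * \<epsilon> ^ DIM('a)"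
      using \<open>0 < \<epsilon>\<close> by (simp add: powr_add powr_realpow)
    finally show ?thesis
      using \<open>0 \<le> A\<close> \<open>0 < \<epsilon>\<close> by (simp add: c_def ennreal_mult[symmetric] mult_ac)
  qed
  finally show ?thesis .
qed

lemma emeasure_tilde_box_le:
  fixes K :: "real \<Rightarrow> 'a::euclidean_space \<Rightarrow> 'b::real_normed_vector" and \<mu> :: "('a \<times> real) measure"
  assumes K: "kernel_decay A \<delta> K" and "0 < \<delta>"
    and K_meas: "(\<lambda>p. K (snd p) (fst p)) \<in> borel_measurable borel"
    and \<mu>: "sets \<mu> = sets borel" and "0 < \<epsilon>"
  shows "emeasure (tilde_measure K \<mu>) (ball y\<^sub>0 \<epsilon> \<times> {0<..<\<epsilon>})
    \<le> ennreal (A * unit_ball_vol (real DIM('a)) * dyadic_const (real DIM('a)) (real DIM('a) + \<delta>)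
        * dyadic_const (real DIM('a)) (real DIM('a) + \<delta>) * (2 * \<epsilon>) powr real DIM('a)) * carleson_norm \<mu>"
proof -
  let ?n = "real DIM('a)" and ?\<omega> = "unit_ball_vol (real DIM('a))"
  let ?D = "dyadic_const ?n (?n + \<delta>)"
  define Q where "Q = ball y\<^sub>0 \<epsilon> \<times> {0<..<\<epsilon>}"
  define F where "F p = (\<integral>\<^sup>+ x. indicator Q (x, snd p) * ennreal (norm (K (snd p) (x - fst p))) \<partial>lborel)" for p
  have Q_sets: "Q \<in> sets borel"
    unfolding Q_def by (intro borel_open open_Times) auto
  have "0 \<le> A" "1 \<le> ?D"
    using kernel_decay_const_nonneg[OF K] dyadic_const_ge_1 \<open>0 < \<delta>\<close> by auto
  have F_slice: "F (y, t) = (\<integral>\<^sup>+ x. indicator (ball y\<^sub>0 \<epsilon>) x * ennreal (norm (K t (x - y))) \<partial>lborel)"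
    if "0 < t" "t < \<epsilon>" for y t
    using that by (simp add: F_def Q_def indicator_def)
  have F_support: "0 < snd p \<and> snd p < \<epsilon>" if "F p \<noteq> 0" for p
    using that by (rule contrapos_np) (auto simp: F_def Q_def indicator_def)
  have F_le: "F p \<le> ennreal (A * ?\<omega> * ?D)" for p
  proof (cases "F p = 0")
    case False
    with F_support have "0 < snd p" by blast
    then show ?thesis
      unfolding F_def
      using borel_measurable_kernel_integrand_slice[OF K_meas Q_sets \<mu>]
      by (rule nn_integral_kernel_le[where y = "fst p", OF K \<open>0 < \<delta>\<close>]) (simp add: indicator_def)
  qed simp
  have "emeasure (tilde_measure K \<mu>) Q = (\<integral>\<^sup>+ p. F p \<partial>\<mu>)"
    unfolding F_def by (rule emeasure_tilde_measure[OF K_meas Q_sets \<mu>])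
  also have "\<dots> \<le> ennreal (A * ?\<omega> * ?D * ?D * (2 * \<epsilon>) powr ?n) * carleson_norm \<mu>"
  proof (rule nn_integral_le_dyadic_balls[where d = "\<lambda>p. norm (fst p - y\<^sub>0)"])
    show "F \<in> borel_measurable \<mu>"
      unfolding F_def[abs_def]
      using lborel.borel_measurable_nn_integral_fst[OF borel_measurable_kernel_integrand[OF K_meas Q_sets \<mu>]]
      by simp
    show "(\<lambda>p. norm (fst p - y\<^sub>0)) \<in> borel_measurable \<mu>"
      unfolding measurable_cong_sets[OF \<mu> refl] by (intro borel_measurable_continuous_onI continuous_intros)
    show "F p \<le> ennreal (A * ?\<omega> * ?D * (norm (fst p - y\<^sub>0) / (2 * \<epsilon>)) powr (- (?n + \<delta>)))"
      if "2 * \<epsilon> \<le> norm (fst p - y\<^sub>0)" for p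
    proof (cases "F p = 0")
      case False
      obtain y t where p: "p = (y, t)" and t: "0 < t" "t < \<epsilon>"
        using F_support[OF False] by (cases p) auto
      have "F p \<le> ennreal (A * ?\<omega> * (norm (y - y\<^sub>0) / (2 * \<epsilon>)) powr (- (?n + \<delta>)))"
        using nn_integral_kernel_ball_far_le[OF K _ t] that \<open>0 < \<delta>\<close> by (simp add: p F_slice[OF t])
      also have "\<dots> \<le> ennreal (A * ?\<omega> * ?D * (norm (y - y\<^sub>0) / (2 * \<epsilon>)) powr (- (?n + \<delta>)))"
        using \<open>0 \<le> A\<close> \<open>1 \<le> ?D\<close> unit_ball_vol_nonneg[of ?n] mult_left_mono[of 1 ?D "A * ?\<omega>"]
        by (intro ennreal_leI mult_right_mono) simp_all
      finally show ?thesis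
        by (simp add: p)
    qed simp
    show "emeasure \<mu> {p \<in> space \<mu>. norm (fst p - y\<^sub>0) < r \<and> F p \<noteq> 0} \<le> ennreal (r powr ?n) * carleson_norm \<mu>"
      if "2 * \<epsilon> \<le> r" for r
    proof -
      have "{p \<in> space \<mu>. norm (fst p - y\<^sub>0) < r \<and> F p \<noteq> 0} \<subseteq> ball y\<^sub>0 r \<times> {0<..<r}"
        using F_support that \<open>0 < \<epsilon>\<close> by (fastforce simp: dist_norm norm_minus_commute)
      moreover have "ball y\<^sub>0 r \<times> {0<..<r} \<in> sets \<mu>"
        unfolding \<mu> by (intro borel_open open_Times) auto
      ultimately have "emeasure \<mu> {p \<in> space \<mu>. norm (fst p - y\<^sub>0) < r \<and> F p \<noteq> 0} \<le> emeasure \<mu> (ball y\<^sub>0 r \<times> {0<..<r})"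
        by (rule emeasure_mono)
      also have "\<dots> \<le> ennreal (r powr ?n) * carleson_norm \<mu>"
        using that \<open>0 < \<epsilon>\<close> by (intro emeasure_box_le_carleson_norm) simp
      finally show ?thesis .
    qed
  qed (use F_le \<open>0 < \<epsilon>\<close> \<open>0 < \<delta>\<close> \<open>0 \<le> A\<close> \<open>1 \<le> ?D\<close> in auto)
  finally show ?thesis
    by (simp add: Q_def)
qed

lemma carleson_norm_tilde_measure_le:
  fixes K :: "real \<Rightarrow> 'a::euclidean_space \<Rightarrow> 'b::real_normed_vector" and \<mu> :: "('a \<times> real) measure"
  assumes K: "kernel_decay A \<delta> K" and "0 < \<delta>"
    and K_meas: "(\<lambda>p. K (snd p) (fst p)) \<in> borel_measurable borel" and \<mu>: "sets \<mu> = sets borel"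
  shows "carleson_norm (tilde_measure K \<mu>)
    \<le> ennreal (A * unit_ball_vol (real DIM('a)) * 2 powr real DIM('a)
        * (dyadic_const (real DIM('a)) (real DIM('a) + \<delta>))\<^sup>2) * carleson_norm \<mu>"
  unfolding carleson_norm_def[of "tilde_measure K \<mu>"]
proof (intro SUP_least)
  let ?n = "real DIM('a)" and ?\<omega> = "unit_ball_vol (real DIM('a))"
  let ?D = "dyadic_const ?n (?n + \<delta>)"
  fix \<epsilon> :: real and y\<^sub>0 :: 'a
  assume "\<epsilon> \<in> {0<..}"
  hence "0 < \<epsilon>" by simp
  have "0 \<le> A * ?\<omega> * ?D * ?D * (2 * \<epsilon>) powr ?n"
    using kernel_decay_const_nonneg[OF K] dyadic_const_ge_1[of ?n "?n + \<delta>"] \<open>0 < \<delta>\<close> unit_ball_vol_nonneg[of ?n]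
    by simp
  have "ennreal (\<epsilon> powr - ?n) * emeasure (tilde_measure K \<mu>) (ball y\<^sub>0 \<epsilon> \<times> {0<..<\<epsilon>})
      \<le> ennreal (\<epsilon> powr - ?n) * (ennreal (A * ?\<omega> * ?D * ?D * (2 * \<epsilon>) powr ?n) * carleson_norm \<mu>)"
    by (intro mult_left_mono emeasure_tilde_box_le[OF K \<open>0 < \<delta>\<close> K_meas \<mu> \<open>0 < \<epsilon>\<close>]) simp
  also have "\<dots> = ennreal (\<epsilon> powr - ?n * (A * ?\<omega> * ?D * ?D * (2 * \<epsilon>) powr ?n)) * carleson_norm \<mu>"
    using \<open>0 \<le> A * ?\<omega> * ?D * ?D * (2 * \<epsilon>) powr ?n\<close>
    by (subst ennreal_mult[of "\<epsilon> powr - ?n"]) (simp_all add: mult.assoc)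
  also have "\<epsilon> powr - ?n * (A * ?\<omega> * ?D * ?D * (2 * \<epsilon>) powr ?n) = A * ?\<omega> * 2 powr ?n * ?D\<^sup>2"
    using \<open>0 < \<epsilon>\<close> by (simp add: powr_mult powr_add[symmetric] power2_eq_square mult_ac)
  finally show "ennreal (\<epsilon> powr - ?n) * emeasure (tilde_measure K \<mu>) (ball y\<^sub>0 \<epsilon> \<times> {0<..<\<epsilon>})
      \<le> ennreal (A * ?\<omega> * 2 powr ?n * ?D\<^sup>2) * carleson_norm \<mu>" .
qed

theorem lemma4p10:
  fixes \<delta> A :: real
  assumes "\<delta> > 0"
  shows "\<exists>C::real. C \<ge> 0 \<and>
    (\<forall>(\<mu>::('a::euclidean_space \<times> real) measure) (K::real \<Rightarrow> 'a \<Rightarrow> complex).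
       carleson_measure \<mu>
       \<and> (\<lambda>p. K (snd p) (fst p)) \<in> borel_measurable borel
       \<and> (\<forall>t>0. \<forall>z. norm (K t z) \<le> A * t powr (- real DIM('a)) * (1 + norm z / t) powr (- (real DIM('a) + \<delta>)))
       \<longrightarrow> carleson_measure (tilde_measure K \<mu>)
           \<and> carleson_norm (tilde_measure K \<mu>) \<le> ennreal C * carleson_norm \<mu>)"
proof -
  let ?n = "real DIM('a)"
  \<comment> \<open>\<open>C\<close> is chosen before any kernel is given; only for \<open>A \<ge> 0\<close> do kernels exist.\<close>
  define C where "C = max A 0 * unit_ball_vol ?n * 2 powr ?n * (dyadic_const ?n (?n + \<delta>))\<^sup>2"
  have "0 \<le> C"
    unfolding C_def by (simp add: unit_ball_vol_nonneg)
  show ?thesis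
  proof (intro exI[of _ C] conjI allI impI \<open>0 \<le> C\<close>)
    fix \<mu> :: "('a \<times> real) measure" and K :: "real \<Rightarrow> 'a \<Rightarrow> complex"
    assume "carleson_measure \<mu> \<and> (\<lambda>p. K (snd p) (fst p)) \<in> borel_measurable borel
       \<and> (\<forall>t>0. \<forall>z. norm (K t z) \<le> A * t powr (- ?n) * (1 + norm z / t) powr (- (?n + \<delta>)))"
    hence \<mu>: "sets \<mu> = sets borel" "emeasure \<mu> (- upper_half_space) = 0" "carleson_norm \<mu> < \<infinity>"
      and K_meas: "(\<lambda>p. K (snd p) (fst p)) \<in> borel_measurable borel"
      and K: "kernel_decay A \<delta> K"
      by (auto simp: carleson_measure_def borel_measure_uhs_def kernel_decay_def)
    have C: "C = A * unit_ball_vol ?n * 2 powr ?n * (dyadic_const ?n (?n + \<delta>))\<^sup>2"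
      using kernel_decay_const_nonneg[OF K] by (simp add: C_def)
    show norm_le: "carleson_norm (tilde_measure K \<mu>) \<le> ennreal C * carleson_norm \<mu>"
      unfolding C using carleson_norm_tilde_measure_le[OF K \<open>0 < \<delta>\<close> K_meas \<mu>(1)] .
    show "carleson_measure (tilde_measure K \<mu>)"
      unfolding carleson_measure_def borel_measure_uhs_def
      using sets_tilde_measure emeasure_tilde_measure_outside_upper_half_space[OF K_meas \<mu>(1,2)]
        norm_le \<mu>(3) by (auto simp: ennreal_mult_less_top le_less_trans)
  qed
qed

end
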